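(* Let $d\in\{2,3\}$, $\kappa>0$, $\sigma^{-1}=2\kappa$, $\rho(s)=(2/s)^{d/2}\Gamma(d/2+1)J_{d/2}(s)$ (with $\rho(0)=1$), and $k(t)=\rho(\sigma^{-1}|t|)$ for $t\in\mathbb{R}^d$. Let $\mathfrak{d}(x,x')=\sigma^{-1}|x-x'|/\sqrt{d+2}$ and $|v|_\ast=\sigma^{-1}|v|/\sqrt{d+2}$ for $v\in\mathbb{R}^d$. Then for all $x,x'\in\mathbb{R}^d$ with $\mathfrak{d}(x,x')\le r_{\mathrm{near}}:=1/\sqrt5$ and all $v\in\mathbb{R}^d$, $$-v^T\nabla^2k(x-x')\,v\ \ge\ \bar\epsilon_2\,|v|_\ast^2,\qquad\text{where }\bar\epsilon_2:=0.6<r_{\mathrm{near}}^{-2}.$$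
   Context: $J_{d/2}$ is the Bessel function of the first kind of order $d/2$. The function $k$ is the kernel $K(x,x')=k(x-x')=\int_{B(0,2\kappa)}e^{i\langle\omega,x-x'\rangle}\,d\Lambda(\omega)$ with $\Lambda$ uniform on $B(0,2\kappa)$; it is smooth on $\mathbb{R}^d$. The quantity $v^T\nabla^2k(x-x')v$ is the paper's $K^{(02)}(x,x')[v,v]$, $\mathfrak{d}$ is its Fisher metric distance and $|v|_\ast$ its norm $|v|_x$. *)

theory Defs
  imports "HOL-Analysis.Analysis"
begin

definition bessel_J :: "real \<Rightarrow> real \<Rightarrow> real" where
  "bessel_J nu s = (\<Sum>m. (-1) ^ m / (fact m * Gamma (real m + nu + 1)) * (s / 2) ^ (2 * m))
                   * (s / 2) powr nu"

definition rho :: "nat \<Rightarrow> real \<Rightarrow> real" where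
  "rho d s = (if s = 0 then 1
              else (2 / s) powr (real d / 2) * Gamma (real d / 2 + 1) * bessel_J (real d / 2) s)"

definition kern :: "real \<Rightarrow> real ^ 'n \<Rightarrow> real" where
  "kern \<kappa> t = rho CARD('n) (2 * \<kappa> * norm t)"

definition partial :: "(real ^ 'n \<Rightarrow> real) \<Rightarrow> 'n \<Rightarrow> real ^ 'n \<Rightarrow> real" where
  "partial f j y = deriv (\<lambda>u. f (y + u *\<^sub>R axis j 1)) 0"

definition hessian :: "(real ^ 'n \<Rightarrow> real) \<Rightarrow> real ^ 'n \<Rightarrow> 'n \<Rightarrow> 'n \<Rightarrow> real" where
  "hessian f x i j = partial (partial f j) i x"

definition hessian_form :: "(real ^ 'n \<Rightarrow> real) \<Rightarrow> real ^ 'n \<Rightarrow> real ^ 'n \<Rightarrow> real" where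
  "hessian_form f x v = (\<Sum>i\<in>UNIV. \<Sum>j\<in>UNIV. v $ i * hessian f x i j * v $ j)"

definition fisher_dist :: "real \<Rightarrow> real ^ 'n \<Rightarrow> real ^ 'n \<Rightarrow> real" where
  "fisher_dist \<kappa> x x' = 2 * \<kappa> * norm (x - x') / sqrt (real CARD('n) + 2)"

definition fisher_norm :: "real \<Rightarrow> real ^ 'n \<Rightarrow> real" where
  "fisher_norm \<kappa> v = 2 * \<kappa> * norm v / sqrt (real CARD('n) + 2)"

end

theory Submission
  imports Defs
begin

text \<open>
  With \<nu> = d/2 one has rho(s) = F(s^2) for the entire power series
  F(y) = sum_m (-1)^m y^m / (m! (\<nu>+1)_m 4^m), so the kernel is the radial function
  k(t) = F(a |t|^2) with a = 4 \<kappa>^2, and its Hessian at t is 4 a^2 F''(w) t t^T + 2 a F'(w) I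
  with w = a |t|^2. The coefficients of F'' shrink at least by the factor 1/16 from one to
  the next, so |F''| \<le> 1/(15 (\<nu>+1)(\<nu>+2)) on [-1, 1], and by the mean value theorem F'
  stays close to F'(0) = -1/(4 (\<nu>+1)). The hypothesis on the Fisher distance gives
  w \<le> (d+2)/5 \<le> 1 for d \<le> 3, and there the negative multiple of the identity dominates
  the rank-one term with the margin 0.3/(\<nu>+1) = 0.6/(d+2).
\<close>

lemma one_le_pochhammer:
  fixes z :: real
  assumes "z \<ge> 1"
  shows "pochhammer z n \<ge> 1"
proof (induction n)
  case (Suc n)
  have "1 \<le> pochhammer z n * (z + real n)"
    using Suc assms by (intro mult_ge1_I) auto
  then show ?case by (simp add: pochhammer_Suc)
qed simp

lemma abs_powser_le_ratio_bound:
  fixes c :: "nat \<Rightarrow> real"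
  assumes ratio: "\<And>n. \<bar>c (Suc n)\<bar> \<le> q * \<bar>c n\<bar>" and "0 \<le> q" "q < 1" "\<bar>w\<bar> \<le> 1"
  shows "\<bar>\<Sum>n. c n * w ^ n\<bar> \<le> \<bar>c 0\<bar> / (1 - q)"
proof -
  have c_le: "\<bar>c n\<bar> \<le> \<bar>c 0\<bar> * q ^ n" for n
  proof (induction n)
    case (Suc n)
    have "\<bar>c (Suc n)\<bar> \<le> q * (\<bar>c 0\<bar> * q ^ n)"
      using ratio[of n] mult_left_mono[OF Suc \<open>0 \<le> q\<close>] by linarith
    then show ?case by (simp add: algebra_simps)
  qed simp
  have "norm (c n * w ^ n) \<le> \<bar>c 0\<bar> * q ^ n" for n
  proof -
    have "\<bar>w\<bar> ^ n \<le> 1" using assms by (simp add: power_le_one)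
    then have "\<bar>c n\<bar> * \<bar>w\<bar> ^ n \<le> \<bar>c n\<bar>" by (simp add: mult_left_le)
    then show ?thesis using c_le[of n] by (simp add: abs_mult power_abs)
  qed
  moreover have geometric: "(\<lambda>n. \<bar>c 0\<bar> * q ^ n) sums (\<bar>c 0\<bar> * (1 / (1 - q)))"
    using assms by (intro sums_mult geometric_sums) simp
  ultimately have "norm (\<Sum>n. c n * w ^ n) \<le> (\<Sum>n. \<bar>c 0\<bar> * q ^ n)"
    by (intro norm_suminf_le) (auto simp: sums_iff)
  then show ?thesis
    using geometric by (simp add: sums_iff)
qed

lemma inner_add_scaleR_axis_self:
  fixes y :: "real ^ 'n"
  shows "(y + u *\<^sub>R axis j 1) \<bullet> (y + u *\<^sub>R axis j 1) = y \<bullet> y + 2 * u * y $ j + u\<^sup>2"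
  by (simp add: inner_add_left inner_add_right inner_axis inner_axis' inner_commute
      power2_eq_square algebra_simps)

lemma partial_radial:
  assumes "\<And>y. (F has_real_derivative F' y) (at y)"
  shows "partial (\<lambda>t::real ^ 'n. F (a * (t \<bullet> t))) j = (\<lambda>y. F' (a * (y \<bullet> y)) * (2 * a * y $ j))"
proof
  fix y :: "real ^ 'n"
  have "((\<lambda>u. F (a * (y \<bullet> y + 2 * u * y $ j + u\<^sup>2))) has_real_derivative
          F' (a * (y \<bullet> y)) * (2 * a * y $ j)) (at 0)"
    by (rule DERIV_cong[OF DERIV_chain2[OF assms]]) (auto intro!: derivative_eq_intros)
  then show "partial (\<lambda>t. F (a * (t \<bullet> t))) j y = F' (a * (y \<bullet> y)) * (2 * a * y $ j)"
    unfolding partial_def inner_add_scaleR_axis_self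
    by (intro DERIV_imp_deriv) (simp add: algebra_simps)
qed

lemma hessian_radial:
  assumes "\<And>y. (F has_real_derivative F' y) (at y)"
    and "\<And>y. (F' has_real_derivative F'' y) (at y)"
  shows "hessian (\<lambda>t::real ^ 'n. F (a * (t \<bullet> t))) x i j
     = F'' (a * (x \<bullet> x)) * (2 * a * x $ i) * (2 * a * x $ j)
       + F' (a * (x \<bullet> x)) * (2 * a * (if i = j then 1 else 0))"
proof -
  define \<delta> :: real where "\<delta> = (if i = j then 1 else 0)"
  have component: "(x + u *\<^sub>R axis i 1) $ j = x $ j + u * \<delta>" for u
    by (simp add: axis_def \<delta>_def)
  have "((\<lambda>u. F' (a * (x \<bullet> x + 2 * u * x $ i + u\<^sup>2)) * (2 * a * (x $ j + u * \<delta>)))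
      has_real_derivative F'' (a * (x \<bullet> x)) * (2 * a * x $ i) * (2 * a * x $ j)
                          + F' (a * (x \<bullet> x)) * (2 * a * \<delta>)) (at 0)"
    by (rule DERIV_cong[OF DERIV_mult[OF DERIV_chain2[OF assms(2)]]])
      (auto intro!: derivative_eq_intros simp: algebra_simps)
  then show ?thesis
    unfolding hessian_def partial_radial[OF assms(1)] partial_def inner_add_scaleR_axis_self
      component \<delta>_def[symmetric]
    by (intro DERIV_imp_deriv) simp
qed

lemma hessian_form_radial:
  assumes "\<And>y. (F has_real_derivative F' y) (at y)"
    and "\<And>y. (F' has_real_derivative F'' y) (at y)"
  shows "hessian_form (\<lambda>t::real ^ 'n. F (a * (t \<bullet> t))) x v
     = 4 * a\<^sup>2 * F'' (a * (x \<bullet> x)) * (x \<bullet> v)\<^sup>2 + 2 * a * F' (a * (x \<bullet> x)) * (v \<bullet> v)"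
proof -
  define P where "P = F'' (a * (x \<bullet> x))"
  define Q where "Q = F' (a * (x \<bullet> x))"
  have "hessian_form (\<lambda>t::real ^ 'n. F (a * (t \<bullet> t))) x v
      = (\<Sum>i\<in>UNIV. \<Sum>j\<in>UNIV. 4 * a\<^sup>2 * P * (x $ i * v $ i) * (x $ j * v $ j)
                               + (if i = j then 2 * a * Q * (v $ i * v $ j) else 0))"
    unfolding hessian_form_def hessian_radial[OF assms] P_def[symmetric] Q_def[symmetric]
    by (intro sum.cong refl) (simp add: power2_eq_square algebra_simps)
  also have "\<dots> = 4 * a\<^sup>2 * P * (x \<bullet> v) * (x \<bullet> v) + 2 * a * Q * (v \<bullet> v)"
    by (simp add: sum.distrib sum_distrib_left[symmetric] sum_product inner_vec_def mult.assoc)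
  finally show ?thesis
    by (simp add: P_def Q_def power2_eq_square)
qed

definition bessel_coeff :: "real \<Rightarrow> nat \<Rightarrow> real" where
  "bessel_coeff \<nu> m = (-1) ^ m / (fact m * pochhammer (\<nu> + 1) m * 4 ^ m)"

definition bessel_powser :: "nat \<Rightarrow> real \<Rightarrow> real \<Rightarrow> real" where
  "bessel_powser k \<nu> y = (\<Sum>m. (diffs ^^ k) (bessel_coeff \<nu>) m * y ^ m)"

lemma abs_bessel_coeff_le:
  assumes "\<nu> \<ge> 0"
  shows "\<bar>bessel_coeff \<nu> m\<bar> \<le> inverse (fact m)"
proof -
  have "1 \<le> pochhammer (\<nu> + 1) m * (4::real) ^ m"
    using one_le_pochhammer[of "\<nu> + 1" m] assms by (intro mult_ge1_I) auto
  then show ?thesis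
    by (simp add: bessel_coeff_def abs_mult power_abs divide_simps)
qed

lemma summable_bessel_powser:
  assumes "\<nu> \<ge> 0"
  shows "summable (\<lambda>m. (diffs ^^ k) (bessel_coeff \<nu>) m * y ^ m)"
proof (induction k arbitrary: y)
  case 0
  show ?case
  proof (rule summable_comparison_test[OF _ summable_exp[of "\<bar>y\<bar>"]])
    show "\<exists>N. \<forall>m\<ge>N. norm ((diffs ^^ 0) (bessel_coeff \<nu>) m * y ^ m) \<le> inverse (fact m) * \<bar>y\<bar> ^ m"
      using abs_bessel_coeff_le[OF assms]
      by (auto simp: abs_mult power_abs intro!: mult_right_mono)
  qed
next
  case (Suc k)
  then show ?case
    unfolding funpow.simps(2) o_apply by (rule termdiff_converges_all)
qed

lemma bessel_powser_has_real_derivative: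
  assumes "\<nu> \<ge> 0"
  shows "(bessel_powser k \<nu> has_real_derivative bessel_powser (Suc k) \<nu> y) (at y)"
  unfolding bessel_powser_def[abs_def] funpow.simps(2) o_apply
  by (rule termdiffs_strong_converges_everywhere) (rule summable_bessel_powser[OF assms])

lemma rho_eq_bessel_powser:
  assumes "s \<ge> 0"
  shows "rho d s = bessel_powser 0 (real d / 2) (s\<^sup>2)"
proof (cases "s = 0")
  case True
  then show ?thesis
    by (simp add: rho_def bessel_powser_def) (simp add: bessel_coeff_def)
next
  case False
  define \<nu> where "\<nu> = real d / 2"
  have "\<nu> \<ge> 0" by (simp add: \<nu>_def)
  then have Gamma_pos: "Gamma (\<nu> + 1) > 0"
    by (intro Gamma_real_pos) auto
  have "\<nu> + 1 \<notin> \<int>\<^sub>\<le>\<^sub>0"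
    using \<open>\<nu> \<ge> 0\<close> nonpos_Ints_nonpos[of "\<nu> + 1"] by force
  then have Gamma_shift: "Gamma (real m + \<nu> + 1) = pochhammer (\<nu> + 1) m * Gamma (\<nu> + 1)" for m
    using pochhammer_Gamma[of "\<nu> + 1" m] Gamma_pos by (simp add: field_simps)
  have "(-1) ^ m / (fact m * Gamma (real m + \<nu> + 1)) * (s / 2) ^ (2 * m)
        = bessel_coeff \<nu> m * (s\<^sup>2) ^ m / Gamma (\<nu> + 1)" for m
  proof -
    have "(s / 2) ^ (2 * m) = (s\<^sup>2) ^ m / 4 ^ m"
      by (simp add: power_mult power_divide)
    then show ?thesis
      using Gamma_pos unfolding Gamma_shift bessel_coeff_def by (simp only:) (simp add: field_simps)
  qed
  then have "bessel_J \<nu> s = bessel_powser 0 \<nu> (s\<^sup>2) / Gamma (\<nu> + 1) * (s / 2) powr \<nu>"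
    unfolding bessel_J_def bessel_powser_def funpow_0
    using summable_bessel_powser[OF \<open>\<nu> \<ge> 0\<close>, of 0 "s\<^sup>2"]
    by (simp add: suminf_divide)
  then have "rho d s = ((2 / s) powr \<nu> * (s / 2) powr \<nu>) * bessel_powser 0 \<nu> (s\<^sup>2)"
    using False Gamma_pos by (simp add: rho_def \<nu>_def[symmetric])
  also have "(2 / s) powr \<nu> * (s / 2) powr \<nu> = 1"
    using False assms by (simp add: powr_mult[symmetric])
  finally show ?thesis by (simp add: \<nu>_def)
qed

lemma bessel_coeff_Suc:
  assumes "\<nu> \<ge> 0"
  shows "bessel_coeff \<nu> (Suc m) = - bessel_coeff \<nu> m / (4 * (real m + 1) * (\<nu> + real m + 1))"
  using pochhammer_pos[of "\<nu> + 1" m] assms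
  by (simp add: bessel_coeff_def pochhammer_Suc field_simps)

lemma abs_diffs2_bessel_coeff_Suc_le:
  assumes "\<nu> \<ge> 1"
  shows "\<bar>(diffs ^^ 2) (bessel_coeff \<nu>) (Suc n)\<bar> \<le> \<bar>(diffs ^^ 2) (bessel_coeff \<nu>) n\<bar> / 16"
proof -
  have "\<nu> \<ge> 0" using assms by simp
  define e where "e = (diffs ^^ 2) (bessel_coeff \<nu>)"
  define q where "q = 4 * (real n + 1) * (\<nu> + real n + 3)"
  have e_eq: "e m = (real m + 1) * (real m + 2) * bessel_coeff \<nu> (m + 2)" for m
    by (simp add: e_def numeral_2_eq_2 diffs_def algebra_simps)
  have "4 * 1 * 4 \<le> q"
    unfolding q_def using assms by (intro mult_mono) auto
  then have "q > 0" "real n + 3 \<noteq> 0"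
    by auto
  have "e (Suc n) = (real n + 2) * (real n + 3) * bessel_coeff \<nu> (Suc (n + 2))"
    by (simp add: e_eq algebra_simps)
  also have "\<dots> = - e n / q"
    using \<open>q > 0\<close> \<open>real n + 3 \<noteq> 0\<close> assms
    unfolding bessel_coeff_Suc[OF \<open>\<nu> \<ge> 0\<close>] e_eq q_def by (simp add: field_simps)
  finally have "e (Suc n) = - e n / q" .
  then have "\<bar>e (Suc n)\<bar> = \<bar>e n\<bar> / q"
    using \<open>q > 0\<close> by (simp add: abs_divide)
  also have "\<dots> \<le> \<bar>e n\<bar> / 16"
    using \<open>4 * 1 * 4 \<le> q\<close> by (intro divide_left_mono) auto
  finally show ?thesis by (simp add: e_def)
qed

lemma abs_bessel_powser_2_le:
  assumes "\<nu> \<ge> 1" "\<bar>w\<bar> \<le> 1"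
  shows "\<bar>bessel_powser 2 \<nu> w\<bar> \<le> 1 / (15 * (\<nu> + 1) * (\<nu> + 2))"
proof -
  have "\<bar>bessel_powser 2 \<nu> w\<bar> \<le> \<bar>(diffs ^^ 2) (bessel_coeff \<nu>) 0\<bar> / (1 - 1/16)"
    unfolding bessel_powser_def
    using abs_diffs2_bessel_coeff_Suc_le[OF assms(1)] assms(2)
    by (intro abs_powser_le_ratio_bound) auto
  also have "(diffs ^^ 2) (bessel_coeff \<nu>) 0 = 2 * bessel_coeff \<nu> 2"
    by (simp add: numeral_2_eq_2 diffs_def)
  also have "bessel_coeff \<nu> 2 = 1 / (32 * (\<nu> + 1) * (\<nu> + 2))"
    by (simp add: bessel_coeff_def pochhammer_Suc numeral_2_eq_2 field_simps)
  also have "\<bar>2 * (1 / (32 * (\<nu> + 1) * (\<nu> + 2)))\<bar> / (1 - 1/16) = 1 / (15 * (\<nu> + 1) * (\<nu> + 2))"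
  proof -
    have "\<bar>2 * (1 / (32 * P))\<bar> / (1 - 1/16) = 1 / (15 * P)" if "P > 0" for P :: real
      using that by simp
    moreover have "(\<nu> + 1) * (\<nu> + 2) > 0"
      using assms(1) by simp
    ultimately show ?thesis
      by (simp only: mult.assoc)
  qed
  finally show ?thesis .
qed

lemma bessel_powser_1_le:
  assumes "\<nu> \<ge> 1" "0 \<le> w" "w \<le> 1"
  shows "bessel_powser 1 \<nu> w \<le> - 1 / (4 * (\<nu> + 1)) + w / (15 * (\<nu> + 1) * (\<nu> + 2))"
proof (cases "w = 0")
  case True
  show ?thesis
    unfolding True bessel_powser_def powser_zero by (simp add: diffs_def bessel_coeff_def field_simps)
next
  case False
  have "\<nu> \<ge> 0" using assms by simp
  obtain z where z: "0 < z" "z < w"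
    and mvt: "bessel_powser 1 \<nu> w - bessel_powser 1 \<nu> 0 = (w - 0) * bessel_powser 2 \<nu> z"
    using MVT2[of 0 w "bessel_powser 1 \<nu>" "bessel_powser 2 \<nu>"] False assms
      bessel_powser_has_real_derivative[OF \<open>\<nu> \<ge> 0\<close>, of 1]
    by (auto simp: numeral_2_eq_2)
  have "bessel_powser 1 \<nu> 0 = - 1 / (4 * (\<nu> + 1))"
    unfolding bessel_powser_def powser_zero by (simp add: diffs_def bessel_coeff_def field_simps)
  moreover have "w * bessel_powser 2 \<nu> z \<le> w * (1 / (15 * (\<nu> + 1) * (\<nu> + 2)))"
    using abs_bessel_powser_2_le[OF assms(1), of z] z assms
    by (intro mult_left_mono) auto
  ultimately show ?thesis
    using mvt by simp
qed

lemma kern_eq_bessel_powser: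
  assumes "\<kappa> \<ge> 0"
  shows "kern \<kappa> = (\<lambda>t::real ^ 'n. bessel_powser 0 (real CARD('n) / 2) (4 * \<kappa>\<^sup>2 * (t \<bullet> t)))"
proof
  fix t :: "real ^ 'n"
  have "kern \<kappa> t = bessel_powser 0 (real CARD('n) / 2) ((2 * \<kappa> * norm t)\<^sup>2)"
    unfolding kern_def using assms by (intro rho_eq_bessel_powser) simp
  then show "kern \<kappa> t = bessel_powser 0 (real CARD('n) / 2) (4 * \<kappa>\<^sup>2 * (t \<bullet> t))"
    by (simp add: power_mult_distrib power2_norm_eq_inner)
qed

text \<open>In the application Q = (X \<bullet> v)^2, V = v \<bullet> v and w = a (X \<bullet> X), so that
  a Q \<le> w V is Cauchy-Schwarz.\<close>

lemma bessel_hessian_estimate: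
  assumes "\<nu> \<ge> 1" "a > 0" "0 \<le> w" "w \<le> 1" "0 \<le> Q" "0 \<le> V" "a * Q \<le> w * V"
  shows "4 * a\<^sup>2 * bessel_powser 2 \<nu> w * Q + 2 * a * bessel_powser 1 \<nu> w * V
           \<le> - (0.3 / (\<nu> + 1) * a * V)"
proof -
  define R where "R = 1 / (4 * (\<nu> + 1))"
  define E where "E = 1 / (15 * (\<nu> + 1) * (\<nu> + 2))"
  have "E \<ge> 0" using assms(1) by (simp add: E_def)
  have F1_le: "bessel_powser 1 \<nu> w \<le> - R + w * E"
    using bessel_powser_1_le[OF assms(1,3,4)] by (simp add: R_def E_def)
  have "\<bar>bessel_powser 2 \<nu> w\<bar> \<le> E"
    using abs_bessel_powser_2_le[OF assms(1), of w] assms(3,4) by (simp add: E_def)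
  then have "4 * a * (bessel_powser 2 \<nu> w * (a * Q)) \<le> 4 * a * (E * (w * V))"
    using assms(2,5) \<open>E \<ge> 0\<close> by (intro mult_left_mono mult_mono[OF _ assms(7)]) auto
  moreover have "(2 * a * V) * bessel_powser 1 \<nu> w \<le> (2 * a * V) * (- R + w * E)"
    using F1_le assms(2,6) by (intro mult_left_mono) auto
  moreover have "0.3 / (\<nu> + 1) \<le> 2 * R - 6 * w * E"
  proof -
    define t where "t = 1 / (\<nu> + 1)"
    have "E \<le> 1 / (15 * (\<nu> + 1) * 3)"
      unfolding E_def using assms(1) by (intro divide_left_mono mult_left_mono) auto
    then have "E \<le> t / 45"
      by (simp add: t_def mult.commute)
    moreover have "w * E \<le> E"
      using assms(3,4) \<open>E \<ge> 0\<close> by (simp add: mult_left_le_one_le)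
    moreover have "t > 0" "R = t / 4" "0.3 / (\<nu> + 1) = 0.3 * t" "6 * w * E = 6 * (w * E)"
      using assms(1) by (simp_all add: R_def t_def)
    ultimately show ?thesis
      by linarith
  qed
  then have "a * V * (0.3 / (\<nu> + 1)) \<le> a * V * (2 * R - 6 * w * E)"
    using assms(2,6) by (intro mult_left_mono) auto
  ultimately show ?thesis
    by (simp add: power2_eq_square algebra_simps)
qed

lemma neg_hessian_form_kern_ge:
  fixes X v :: "real ^ 'n"
  assumes "CARD('n) \<ge> 2" "\<kappa> > 0" "4 * \<kappa>\<^sup>2 * (X \<bullet> X) \<le> 1"
  shows "- hessian_form (kern \<kappa>) X v \<ge> 0.6 * (fisher_norm \<kappa> v)\<^sup>2"
proof -
  define \<nu> where "\<nu> = real CARD('n) / 2"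
  define a where "a = 4 * \<kappa>\<^sup>2"
  have "\<nu> \<ge> 1" "a > 0" using assms(1,2) by (simp_all add: \<nu>_def a_def)
  have "hessian_form (kern \<kappa>) X v
      = 4 * a\<^sup>2 * bessel_powser 2 \<nu> (a * (X \<bullet> X)) * (X \<bullet> v)\<^sup>2
        + 2 * a * bessel_powser 1 \<nu> (a * (X \<bullet> X)) * (v \<bullet> v)"
    unfolding kern_eq_bessel_powser[OF less_imp_le[OF assms(2)]] \<nu>_def[symmetric] a_def[symmetric]
    using bessel_powser_has_real_derivative[of \<nu> 0] bessel_powser_has_real_derivative[of \<nu> 1]
      \<open>\<nu> \<ge> 1\<close>
    by (intro hessian_form_radial) (simp_all add: numeral_2_eq_2)
  also have "\<dots> \<le> - (0.3 / (\<nu> + 1) * a * (v \<bullet> v))"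
  proof (rule bessel_hessian_estimate)
    have "(X \<bullet> v)\<^sup>2 \<le> (X \<bullet> X) * (v \<bullet> v)"
      by (metis Cauchy_Schwarz_ineq power2_eq_square)
    then show "a * (X \<bullet> v)\<^sup>2 \<le> a * (X \<bullet> X) * (v \<bullet> v)"
      using \<open>a > 0\<close> by (simp add: mult.assoc)
  qed (use \<open>\<nu> \<ge> 1\<close> \<open>a > 0\<close> assms(3) in \<open>simp_all add: a_def\<close>)
  also have "0.3 / (\<nu> + 1) * a * (v \<bullet> v) = 0.6 * (fisher_norm \<kappa> v)\<^sup>2"
    by (simp add: fisher_norm_def power_divide power_mult_distrib power2_norm_eq_inner
        a_def \<nu>_def field_simps)
  finally show ?thesis
    by linarith
qed

theorem lemma3:
  fixes \<kappa> :: real and x x' v :: "real ^ 'n"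
  assumes "CARD('n) = 2 \<or> CARD('n) = 3"
    and "\<kappa> > 0"
    and "fisher_dist \<kappa> x x' \<le> 1 / sqrt 5"
  shows "- hessian_form (kern \<kappa>) (x - x') v \<ge> 0.6 * (fisher_norm \<kappa> v)\<^sup>2
         \<and> (0.6::real) < (1 / sqrt 5) powr (-2)"
proof
  have "(2 * \<kappa> * norm (x - x') / sqrt (real CARD('n) + 2))\<^sup>2 \<le> (1 / sqrt 5)\<^sup>2"
    using assms(2,3) unfolding fisher_dist_def by (intro power_mono) auto
  then have "4 * \<kappa>\<^sup>2 * ((x - x') \<bullet> (x - x')) \<le> (real CARD('n) + 2) / 5"
    by (simp add: power_divide power_mult_distrib power2_norm_eq_inner field_simps)
  also have "\<dots> \<le> 1"
    using assms(1) by auto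
  finally show "- hessian_form (kern \<kappa>) (x - x') v \<ge> 0.6 * (fisher_norm \<kappa> v)\<^sup>2"
    using assms(1,2) by (intro neg_hessian_form_kern_ge) auto
  show "(0.6::real) < (1 / sqrt 5) powr (-2)"
    by (simp add: powr_minus powr_numeral power_divide)
qed

end
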